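(* Let $\Theta$ be a finite-dimensional real inner product space, $\mathcal L:\Theta\to\mathbb R_+$ differentiable, $\theta_0\in\Theta$, $\varepsilon\in\mathbb R_+^*$, $R\in\mathbb R_+$, $c\in\mathbb R_+^*$. If for all $\theta\in\Theta$ with $\|\theta-\theta_0\|\le R$ it holds $\|\nabla\mathcal L(\theta)\|\ge(\mathcal L(\theta)-\varepsilon)_+/(\|\theta-\theta_0\|+c)$, then $(\mathcal L,\theta_0)$ satisfies the Convergence Criterion with limit error $\varepsilon_0=\tau\mathcal L(\theta_0)+(1-\tau)\varepsilon$, where $\tau=c/(R+c)\in(0,1]$, and with constant $\kappa=3c^{-2}(\mathcal L(\theta_0)-\varepsilon)_+^{-2}\in\mathbb R_+\cup\{+\infty\}$.
   Context: $(x)_+=\max\{0,x\}$. Convergence Criterion: $(\mathcal L,\theta_0)$ satisfies it with limit error $\varepsilon$ and constant $\kappa\in\mathbb R_+$ if every $\theta:\mathbb R_+\to\Theta$ with $\theta(0)=\theta_0$ and $\partial_t\theta=-\nabla\mathcal L(\theta)$ satisfies $\mathcal L(\theta_t)\le\varepsilon+(\kappa t+1/c)^{-1/3}$ for all $t>0$, where $c=\mathcal L(\theta_0)^3$. For $\kappa=+\infty$ (here arising when $\mathcal L(\theta_0)\le\varepsilon$), it means every such flow satisfies $\mathcal L(\theta_t)\le\varepsilon$ for all $t\ge0$. *)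

theory Defs
  imports "HOL-Analysis.Analysis"
begin

definition grad_flow :: "('a::euclidean_space \<Rightarrow> 'a) \<Rightarrow> 'a \<Rightarrow> (real \<Rightarrow> 'a) \<Rightarrow> bool" where
  "grad_flow gradL theta0 th \<longleftrightarrow>
     th 0 = theta0 \<and>
     (\<forall>t\<ge>0. (th has_vector_derivative (- gradL (th t))) (at t within {0..}))"

definition conv_crit ::
  "('a::euclidean_space \<Rightarrow> real) \<Rightarrow> ('a \<Rightarrow> 'a) \<Rightarrow> 'a \<Rightarrow> real \<Rightarrow> ereal \<Rightarrow> bool" where
  "conv_crit L gradL theta0 eps kappa \<longleftrightarrow>
     (if kappa = \<infinity> then
        (\<forall>th. grad_flow gradL theta0 th \<longrightarrow> (\<forall>t\<ge>0. L (th t) \<le> eps))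
      else
        (\<forall>th. grad_flow gradL theta0 th \<longrightarrow>
           (\<forall>t>0. L (th t) \<le> eps + (real_of_ereal kappa * t + 1 / (L theta0 ^ 3)) powr (-1/3))))"

end

(*
  Along the gradient flow d/dt L = -|grad L|^2, which settles the case L theta0 <= eps.
  While the trajectory stays in the ball of radius R and L >= eps, the weighted excess
  (L - eps) (|theta - theta0| + c) is nonincreasing: its derivative is at most
  -|grad L|^2 (|theta - theta0| + c) + (L - eps) |grad L|, which is nonpositive by the
  gradient inequality. At a first exit time |theta - theta0| = R, so there
  L - eps <= c / (R + c) (L theta0 - eps); hence the trajectory stays in the ball as long as
  the excess is above this level. Inside the ball the two inequalities combine to
  (L - eps)^2 <= |grad L| (L theta0 - eps) c, so (L - eps)^(-3) grows at least at the rate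
  3 / ((L theta0 - eps)^2 c^2), which is the claimed decay.
*)

theory Submission
  imports Defs
begin

lemma GDERIV_compose_has_vector_derivative:
  fixes f :: "'a::real_inner \<Rightarrow> real"
  assumes "GDERIV f (x t) :> G" and "(x has_vector_derivative v) (at t within S)"
  shows "((\<lambda>u. f (x u)) has_real_derivative v \<bullet> G) (at t within S)"
proof -
  have "(x has_derivative (\<lambda>h. h *\<^sub>R v)) (at t within S)"
    using assms(2) by (simp add: has_vector_derivative_def)
  moreover have "(f has_derivative (\<lambda>h. h \<bullet> G)) (at (x t))"
    using assms(1) by (simp add: gderiv_def)
  ultimately have "((\<lambda>u. f (x u)) has_derivative (\<lambda>h. (h *\<^sub>R v) \<bullet> G)) (at t within S)"
    by (rule has_derivative_compose)
  then show ?thesis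
    unfolding has_field_derivative_def by (rule has_derivative_eq_rhs) (auto simp: mult.commute)
qed

lemma GDERIV_norm_diff_power2: "GDERIV (\<lambda>x. norm (x - x0)^2) x :> 2 *\<^sub>R (x - x0)"
  unfolding gderiv_def power2_norm_eq_inner
  by (auto intro!: derivative_eq_intros simp: inner_commute algebra_simps)

lemma GDERIV_smoothed_dist:
  assumes "\<delta> > 0"
  shows "GDERIV (\<lambda>x. sqrt (norm (x - x0)^2 + \<delta>^2)) x
           :> (x - x0) /\<^sub>R sqrt (norm (x - x0)^2 + \<delta>^2)"
proof -
  have pos: "norm (x - x0)^2 + \<delta>^2 > 0"
    using assms by (simp add: add_nonneg_pos)
  have "DERIV (\<lambda>s. sqrt (s + \<delta>^2)) (norm (x - x0)^2)
          :> inverse (sqrt (norm (x - x0)^2 + \<delta>^2)) / 2"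
    using pos by (auto intro!: derivative_eq_intros)
  from GDERIV_DERIV_compose[OF GDERIV_norm_diff_power2 this] show ?thesis
    by (rule GDERIV_subst) simp
qed

lemma first_hitting_time:
  fixes f :: "real \<Rightarrow> real"
  assumes "continuous_on {a..u} f" and "a \<le> u" and "R \<le> f u"
  obtains s where "s \<in> {a..u}" and "R \<le> f s" and "\<forall>v\<in>{a..<s}. f v < R"
proof -
  define S where "S = {a..u} \<inter> f -` {R..}"
  have "closed S"
    unfolding S_def by (rule continuous_closed_preimage[OF assms(1)]) auto
  then have "compact S"
    unfolding S_def by (simp add: compact_eq_bounded_closed bounded_Int)
  moreover have "u \<in> S"
    using assms unfolding S_def by auto
  ultimately obtain s where s: "s \<in> S" and least: "\<forall>v\<in>S. s \<le> v"
    using compact_attains_inf by blast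
  show thesis
  proof
    show "s \<in> {a..u}" and "R \<le> f s"
      using s unfolding S_def by auto
    show "\<forall>v\<in>{a..<s}. f v < R"
    proof
      fix v assume v: "v \<in> {a..<s}"
      then have "v \<notin> S"
        using least by fastforce
      moreover have "v \<in> {a..u}"
        using v s unfolding S_def by auto
      ultimately show "f v < R"
        unfolding S_def by auto
    qed
  qed
qed

lemma le_powr_neg_third:
  fixes f A :: real
  assumes "0 < f" and "0 < A" and "A \<le> inverse (f ^ 3)"
  shows "f \<le> A powr (-1/3)"
proof -
  have "inverse (f ^ 3) = f powr (-3)"
    using assms(1) by (simp add: powr_minus powr_realpow)
  then have "f = inverse (f ^ 3) powr (-1/3)"
    using assms(1) by (simp add: powr_powr)
  also have "\<dots> \<le> A powr (-1/3)"
    using assms by (intro powr_mono2') auto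
  finally show ?thesis .
qed

lemma smoothed_descent_nonpos:
  fixes g w :: "'a::real_inner"
  assumes "0 \<le> f" and "f \<le> norm g * (norm w + c)" and "norm w \<le> D" and "0 < D"
  shows "- ((norm g)^2) * (D + c) + ((- g) \<bullet> (w /\<^sub>R D)) * f \<le> 0"
proof -
  have "(- g) \<bullet> (w /\<^sub>R D) \<le> norm g"
  proof -
    have "(- g) \<bullet> (w /\<^sub>R D) = ((- g) \<bullet> w) / D"
      by (simp add: divide_inverse_commute)
    also have "\<dots> \<le> norm g * norm w / D"
      using assms(4) norm_cauchy_schwarz[of "- g" w] by (intro divide_right_mono) auto
    also have "\<dots> \<le> norm g"
      using assms(3,4) by (simp add: divide_le_eq mult_left_mono)
    finally show ?thesis .
  qed
  then have "((- g) \<bullet> (w /\<^sub>R D)) * f \<le> norm g * f"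
    using assms(1) by (rule mult_right_mono)
  also have "\<dots> \<le> norm g * (norm g * (norm w + c))"
    using assms(2) by (simp add: mult_left_mono)
  also have "\<dots> \<le> norm g * (norm g * (D + c))"
    using assms(3) by (intro mult_left_mono) auto
  finally show ?thesis
    by (simp add: power2_eq_square mult.assoc)
qed

(* The hypotheses give f^2 <= G M c; the conclusion is its square, rearranged. *)
lemma inverse_cube_rate_bound:
  fixes f G r c M :: real
  assumes "0 < f" and "0 < c" and "0 \<le> r"
    and "f \<le> G * (r + c)" and "f * (r + c) \<le> M * c"
  shows "3 / (M^2 * c^2) \<le> 3 * G^2 / f^4"
proof -
  have "0 < G * (r + c)"
    using assms(1,4) by linarith
  then have G: "0 < G"
    using assms(2,3) by (simp add: zero_less_mult_iff)
  have "0 < f * (r + c)"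
    using assms(1-3) by simp
  then have Mc: "0 < M * c"
    using assms(5) by linarith
  have "f^2 \<le> G * (f * (r + c))"
    using mult_left_mono[OF assms(4), of f] assms(1) by (simp add: power2_eq_square algebra_simps)
  also have "\<dots> \<le> G * (M * c)"
    using G assms(5) by simp
  finally have "(f^2)^2 \<le> (G * (M * c))^2"
    using assms(1) by (intro power_mono) auto
  then have f4: "f^4 \<le> G^2 * (M * c)^2"
    by (simp add: power_mult_distrib flip: power_mult)
  have "3 / (M^2 * c^2) = 3 * G^2 / (G^2 * (M * c)^2)"
    using G Mc by (simp add: power_mult_distrib)
  also have "\<dots> \<le> 3 * G^2 / f^4"
    using f4 G Mc assms(1) by (intro divide_left_mono) (auto intro!: mult_pos_pos)
  finally show ?thesis .
qed

lemma le_mult_if_max_0_divide_le: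
  fixes x y d :: real
  assumes "0 < d" and "max 0 x / d \<le> y"
  shows "x \<le> y * d"
  using assms by (simp add: pos_divide_le_eq)

locale loss_gradient_flow =
  fixes L :: "'a::euclidean_space \<Rightarrow> real" and gradL :: "'a \<Rightarrow> 'a"
    and theta0 :: 'a and th :: "real \<Rightarrow> 'a"
  assumes gderiv: "\<And>\<theta>. GDERIV L \<theta> :> gradL \<theta>"
    and flow: "grad_flow gradL theta0 th"
begin

lemma trajectory_start: "th 0 = theta0"
  using flow unfolding grad_flow_def by simp

lemma has_vector_derivative_at:
  assumes "0 < t"
  shows "(th has_vector_derivative - gradL (th t)) (at t)"
proof -
  have "(th has_vector_derivative - gradL (th t)) (at t within {0..})"
    using flow assms unfolding grad_flow_def by simp
  moreover have "at t within {0..} = at t"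
    using assms by (intro at_within_interior) auto
  ultimately show ?thesis
    by simp
qed

lemma continuous_on_trajectory: "continuous_on {0..} th"
  using flow unfolding grad_flow_def
  by (auto intro: has_vector_derivative_continuous simp: continuous_on_eq_continuous_within)

lemma continuous_on_loss: "continuous_on {0..} (\<lambda>u. L (th u))"
proof -
  note continuous_on_trajectory
  moreover have "continuous_on UNIV L"
    using gderiv unfolding gderiv_def
    by (auto intro: has_derivative_continuous continuous_at_imp_continuous_on)
  ultimately show ?thesis
    using continuous_on_compose2[of UNIV L "{0..}" th] by simp
qed

lemma loss_has_derivative:
  assumes "0 < t"
  shows "((\<lambda>u. L (th u)) has_real_derivative - ((norm (gradL (th t)))^2)) (at t)"
  using GDERIV_compose_has_vector_derivative[OF gderiv has_vector_derivative_at[OF assms]]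
  by (simp add: power2_norm_eq_inner)

lemma loss_antimono:
  assumes "0 \<le> a" and "a \<le> b"
  shows "L (th b) \<le> L (th a)"
proof (rule DERIV_nonpos_imp_decreasing_open[OF assms(2)])
  show "continuous_on {a..b} (\<lambda>u. L (th u))"
    using continuous_on_loss by (rule continuous_on_subset) (use assms in auto)
next
  fix x assume "a < x"
  then show "\<exists>y. ((\<lambda>u. L (th u)) has_real_derivative y) (at x) \<and> y \<le> 0"
    using loss_has_derivative[of x] assms(1) by auto
qed

lemma loss_le_start: "0 \<le> t \<Longrightarrow> L (th t) \<le> L theta0"
  using loss_antimono[of 0 t] trajectory_start by simp

(* The distance to theta0 is smoothed because it need not be differentiable where the
   trajectory passes through theta0. *)
lemma smoothed_weighted_excess_le:
  assumes "0 < \<delta>" and "0 \<le> T" and "eps \<le> L (th T)"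
    and grad_bound: "\<forall>v\<in>{0<..<T}. L (th v) - eps \<le> norm (gradL (th v)) * (norm (th v - theta0) + c)"
  shows "(L (th T) - eps) * (sqrt (norm (th T - theta0)^2 + \<delta>^2) + c) \<le> (L theta0 - eps) * (\<delta> + c)"
proof -
  define D where "D u = sqrt (norm (th u - theta0)^2 + \<delta>^2)" for u
  define \<Phi> where "\<Phi> u = (L (th u) - eps) * (D u + c)" for u
  have "\<Phi> T \<le> \<Phi> 0"
  proof (rule DERIV_nonpos_imp_decreasing_open[OF assms(2)])
    fix x assume x: "0 < x" "x < T"
    define g where "g = gradL (th x)"
    define w where "w = th x - theta0"
    have "((\<lambda>u. L (th u) - eps) has_real_derivative - ((norm g)^2)) (at x)"
      using DERIV_diff[OF loss_has_derivative[OF x(1)] DERIV_const[of eps]] by (simp add: g_def)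
    moreover have "((\<lambda>u. D u + c) has_real_derivative (- g) \<bullet> (w /\<^sub>R D x)) (at x)"
      using DERIV_add[OF GDERIV_compose_has_vector_derivative[OF GDERIV_smoothed_dist[OF assms(1)]
          has_vector_derivative_at[OF x(1)]] DERIV_const[of c]]
      by (simp add: D_def g_def w_def)
    ultimately have "(\<Phi> has_real_derivative
        - ((norm g)^2) * (D x + c) + ((- g) \<bullet> (w /\<^sub>R D x)) * (L (th x) - eps)) (at x)"
      unfolding \<Phi>_def by (rule DERIV_mult)
    moreover have "- ((norm g)^2) * (D x + c) + ((- g) \<bullet> (w /\<^sub>R D x)) * (L (th x) - eps) \<le> 0"
    proof (rule smoothed_descent_nonpos)
      show "0 \<le> L (th x) - eps"
        using loss_antimono[of x T] x assms(3) by simp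
      show "L (th x) - eps \<le> norm g * (norm w + c)"
        using grad_bound x by (simp add: g_def w_def)
      show "norm w \<le> D x" and "0 < D x"
        using assms(1) by (simp_all add: D_def w_def real_le_rsqrt add_nonneg_pos)
    qed
    ultimately show "\<exists>y. (\<Phi> has_real_derivative y) (at x) \<and> y \<le> 0"
      by blast
  next
    show "continuous_on {0..T} \<Phi>"
      unfolding \<Phi>_def D_def
      by (intro continuous_intros continuous_on_subset[OF continuous_on_loss]
          continuous_on_subset[OF continuous_on_trajectory]) auto
  qed
  then show ?thesis
    by (simp add: \<Phi>_def D_def trajectory_start assms(1) less_imp_le)
qed

lemma weighted_excess_le:
  assumes "0 \<le> T" and "eps \<le> L (th T)"
    and "\<forall>v\<in>{0<..<T}. L (th v) - eps \<le> norm (gradL (th v)) * (norm (th v - theta0) + c)"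
  shows "(L (th T) - eps) * (norm (th T - theta0) + c) \<le> (L theta0 - eps) * c"
proof (rule tendsto_le[OF trivial_limit_at_right_real])
  show "((\<lambda>\<delta>. (L theta0 - eps) * (\<delta> + c)) \<longlongrightarrow> (L theta0 - eps) * c) (at_right 0)"
    by (auto intro!: tendsto_eq_intros)
  show "((\<lambda>\<delta>. (L (th T) - eps) * (norm (th T - theta0) + c))
          \<longlongrightarrow> (L (th T) - eps) * (norm (th T - theta0) + c)) (at_right 0)"
    by simp
  have "(L (th T) - eps) * (norm (th T - theta0) + c) \<le> (L theta0 - eps) * (\<delta> + c)"
    if "0 < \<delta>" for \<delta>
  proof -
    have "norm (th T - theta0) \<le> sqrt (norm (th T - theta0)^2 + \<delta>^2)"
      by (simp add: real_le_rsqrt)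
    then have "(L (th T) - eps) * (norm (th T - theta0) + c)
        \<le> (L (th T) - eps) * (sqrt (norm (th T - theta0)^2 + \<delta>^2) + c)"
      using assms(2) by (intro mult_left_mono) auto
    also have "\<dots> \<le> (L theta0 - eps) * (\<delta> + c)"
      using smoothed_weighted_excess_le[OF that assms] .
    finally show ?thesis .
  qed
  then show "\<forall>\<^sub>F \<delta> in at_right 0. (L (th T) - eps) * (norm (th T - theta0) + c)
                                 \<le> (L theta0 - eps) * (\<delta> + c)"
    using eventually_at_right_less[of 0] by (rule eventually_mono[rotated]) simp
qed

lemma inverse_cube_excess_growth:
  assumes "0 < c" and "0 \<le> t" and "eps < L (th t)"
    and grad_bound: "\<forall>v\<in>{0<..<t}. L (th v) - eps \<le> norm (gradL (th v)) * (norm (th v - theta0) + c)"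
  shows "inverse ((L theta0 - eps)^3) + 3 / ((L theta0 - eps)^2 * c^2) * t
           \<le> inverse ((L (th t) - eps)^3)"
proof -
  define K where "K = 3 / ((L theta0 - eps)^2 * c^2)"
  define h where "h u = inverse ((L (th u) - eps)^3) - K * u" for u
  have excess_pos: "0 < L (th u) - eps" if "0 \<le> u" "u \<le> t" for u
    using loss_antimono[OF that] assms(3) by simp
  have "h 0 \<le> h t"
  proof (rule DERIV_nonneg_imp_increasing_open[OF assms(2)])
    fix x assume x: "0 < x" "x < t"
    define G where "G = norm (gradL (th x))"
    define f where "f = L (th x) - eps"
    have f: "0 < f"
      using excess_pos x unfolding f_def by simp
    have "((\<lambda>u. L (th u) - eps) has_real_derivative - (G^2)) (at x)"
      using DERIV_diff[OF loss_has_derivative[OF x(1)] DERIV_const[of eps]] by (simp add: G_def)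
    then have "(h has_real_derivative
        - (of_nat 3 * (- (G^2) * f ^ (3 - Suc 0)) * inverse ((f^3) ^ Suc (Suc 0))) - K) (at x)"
      unfolding h_def f_def using f
      by (intro DERIV_diff DERIV_inverse_fun DERIV_power DERIV_cmult_Id) (simp_all add: f_def)
    moreover have "- (of_nat 3 * (- (G^2) * f ^ (3 - Suc 0)) * inverse ((f^3) ^ Suc (Suc 0))) - K
        = 3 * G^2 / f^4 - K"
      using f by (simp add: field_simps eval_nat_numeral)
    ultimately have "(h has_real_derivative 3 * G^2 / f^4 - K) (at x)"
      by (rule DERIV_cong)
    moreover have "K \<le> 3 * G^2 / f^4"
      unfolding K_def
    proof (rule inverse_cube_rate_bound[OF f assms(1) norm_ge_zero])
      show "f \<le> G * (norm (th x - theta0) + c)"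
        using grad_bound x by (simp add: f_def G_def)
      show "f * (norm (th x - theta0) + c) \<le> (L theta0 - eps) * c"
        unfolding f_def using x f grad_bound by (intro weighted_excess_le) (auto simp: f_def)
    qed
    ultimately show "\<exists>y. (h has_real_derivative y) (at x) \<and> 0 \<le> y"
      by auto
  next
    have "(L (th u) - eps)^3 \<noteq> 0" if "u \<in> {0..t}" for u
      using excess_pos[of u] that by simp
    then show "continuous_on {0..t} h"
      unfolding h_def
      by (intro continuous_intros continuous_on_subset[OF continuous_on_loss]) auto
  qed
  then show ?thesis
    by (simp add: h_def K_def trajectory_start)
qed

lemma trajectory_in_ball:
  assumes loj: "\<forall>\<theta>. norm (\<theta> - theta0) \<le> R \<longrightarrow> L \<theta> - eps \<le> norm (gradL \<theta>) * (norm (\<theta> - theta0) + c)"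
    and "0 \<le> R" and "0 < c" and "0 < L theta0 - eps"
    and above: "c / (R + c) * (L theta0 - eps) < L (th t) - eps"
  shows "\<forall>u\<in>{0..t}. norm (th u - theta0) \<le> R"
proof (rule ccontr)
  assume "\<not> ?thesis"
  then obtain u where u: "0 \<le> u" "u \<le> t" "R < norm (th u - theta0)"
    by (auto simp: not_le)
  have "continuous_on {0..u} (\<lambda>v. norm (th v - theta0))"
    by (intro continuous_intros continuous_on_subset[OF continuous_on_trajectory]) auto
  then obtain s where s: "0 \<le> s" "s \<le> u" "R \<le> norm (th s - theta0)"
    and inside: "\<forall>v\<in>{0..<s}. norm (th v - theta0) < R"
    by (rule first_hitting_time[where R = R]) (use u in auto)
  have "0 < c / (R + c) * (L theta0 - eps)"
    using assms(2-4) by simp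
  moreover have excess: "c / (R + c) * (L theta0 - eps) < L (th s) - eps"
    using loss_antimono[of s t] s u above by simp
  moreover have "\<forall>v\<in>{0<..<s}. L (th v) - eps \<le> norm (gradL (th v)) * (norm (th v - theta0) + c)"
  proof
    fix v assume "v \<in> {0<..<s}"
    then have "norm (th v - theta0) < R"
      using inside by simp
    with loj show "L (th v) - eps \<le> norm (gradL (th v)) * (norm (th v - theta0) + c)"
      by simp
  qed
  ultimately have "(L (th s) - eps) * (norm (th s - theta0) + c) \<le> (L theta0 - eps) * c"
    using s(1) by (intro weighted_excess_le) auto
  moreover have "(L theta0 - eps) * c < (L (th s) - eps) * (R + c)"
    using excess assms(2,3) by (simp add: field_simps)
  moreover have "(L (th s) - eps) * (R + c) \<le> (L (th s) - eps) * (norm (th s - theta0) + c)"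
    using s(3) \<open>0 < c / (R + c) * (L theta0 - eps)\<close> excess by (intro mult_left_mono) auto
  ultimately show False
    by linarith
qed

lemma loss_convergence_bound:
  assumes loj: "\<forall>\<theta>. norm (\<theta> - theta0) \<le> R \<longrightarrow> L \<theta> - eps \<le> norm (gradL \<theta>) * (norm (\<theta> - theta0) + c)"
    and "0 \<le> eps" and "0 \<le> R" and "0 < c" and "0 < t" and m: "0 < L theta0 - eps"
  shows "L (th t) \<le> eps + c / (R + c) * (L theta0 - eps)
           + (3 / ((L theta0 - eps)^2 * c^2) * t + 1 / L theta0 ^ 3) powr (-1/3)"
proof (cases "L (th t) - eps \<le> c / (R + c) * (L theta0 - eps)")
  case True
  moreover have "0 \<le> (3 / ((L theta0 - eps)^2 * c^2) * t + 1 / L theta0 ^ 3) powr (-1/3)"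
    by simp
  ultimately show ?thesis
    by linarith
next
  case False
  define f where "f = L (th t) - eps"
  define A where "A = 3 / ((L theta0 - eps)^2 * c^2) * t + 1 / L theta0 ^ 3"
  have "0 < c / (R + c) * (L theta0 - eps)"
    using assms(3,4) m by simp
  then have f: "0 < f"
    using False unfolding f_def by linarith
  have "\<forall>u\<in>{0..t}. norm (th u - theta0) \<le> R"
    using False by (intro trajectory_in_ball[OF loj assms(3,4) m]) simp
  then have "inverse ((L theta0 - eps)^3) + 3 / ((L theta0 - eps)^2 * c^2) * t \<le> inverse (f^3)"
    unfolding f_def using f assms(4,5) loj
    by (intro inverse_cube_excess_growth) (auto simp: f_def)
  moreover have "1 / L theta0 ^ 3 \<le> inverse ((L theta0 - eps)^3)"
    using m assms(2) by (simp add: divide_inverse le_imp_inverse_le power_mono)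
  ultimately have "A \<le> inverse (f^3)"
    unfolding A_def by linarith
  moreover have "0 < A"
    unfolding A_def using m assms(2,4,5) by (simp add: add_nonneg_pos)
  ultimately have "f \<le> A powr (-1/3)"
    using f by (intro le_powr_neg_third)
  with \<open>0 < c / (R + c) * (L theta0 - eps)\<close> show ?thesis
    unfolding f_def A_def by linarith
qed

end

theorem lemma1:
  fixes L :: "'a::euclidean_space \<Rightarrow> real" and gradL :: "'a \<Rightarrow> 'a"
    and theta0 :: 'a and eps R c :: real
  assumes nonneg: "\<forall>\<theta>. L \<theta> \<ge> 0"
    and grad: "\<forall>\<theta>. GDERIV L \<theta> :> gradL \<theta>"
    and eps: "eps > 0" and R: "R \<ge> 0" and c: "c > 0"
    and loj: "\<forall>\<theta>. norm (\<theta> - theta0) \<le> R \<longrightarrow>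
               norm (gradL \<theta>) \<ge> max 0 (L \<theta> - eps) / (norm (\<theta> - theta0) + c)"
  shows "conv_crit L gradL theta0
           (c / (R + c) * L theta0 + (1 - c / (R + c)) * eps)
           (if max 0 (L theta0 - eps) = 0 then \<infinity>
            else ereal (3 * c powr (-2) * (max 0 (L theta0 - eps)) powr (-2)))"
proof -
  define m where "m = L theta0 - eps"
  have error: "c / (R + c) * L theta0 + (1 - c / (R + c)) * eps = eps + c / (R + c) * m"
    unfolding m_def by (simp add: algebra_simps diff_divide_distrib)
  have loj': "\<forall>\<theta>. norm (\<theta> - theta0) \<le> R \<longrightarrow>
                L \<theta> - eps \<le> norm (gradL \<theta>) * (norm (\<theta> - theta0) + c)"
    using loj c by (auto intro: le_mult_if_max_0_divide_le simp: add_nonneg_pos)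
  have flow: "loss_gradient_flow L gradL theta0 th" if "grad_flow gradL theta0 th" for th
    using grad that by unfold_locales auto
  show ?thesis
  proof (cases "m \<le> 0")
    case True
    have "c / (R + c) \<le> 1"
      using R c by simp
    then have "m \<le> c / (R + c) * m"
      using mult_right_mono_neg[OF _ True] by fastforce
    with True show ?thesis
      unfolding conv_crit_def error using loss_gradient_flow.loss_le_start[OF flow]
      by (force simp: m_def)
  next
    case False
    then have "3 * c powr (-2) * (max 0 m) powr (-2) = 3 / (m^2 * c^2)"
      using c by (simp add: powr_minus powr_realpow divide_inverse)
    with False show ?thesis
      unfolding conv_crit_def error
      using loss_gradient_flow.loss_convergence_bound[OF flow loj' _ R c] eps
      by (simp add: m_def)
  qed
qed

end
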